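(* Let $p,q$ be coprime positive integers with $\frac pq<\frac12$, and let $1\le k\le q-2p-2$. Then $P_{k,\frac pq}\triangleleft P_{k+1,\frac pq}$, i.e. $H_2(M_k)>H_2(M_{k+1})$ and $H_2(m_k)>H_2(m_{k+1})$, where $M_r,m_r$ denote the points of absolute maximum and absolute minimum of $P_{r,\frac pq}$.
   Context: $H_2:[0,1]\to[0,1]$ is $H_2(x)=3x$ on $I_0=[0,\frac13]$, $2-3x$ on $I_1=[\frac13,\frac23]$, $3x-2$ on $I_2=[\frac23,1]$. For coprime $p,q$ with $0<\frac pq<\frac12$ and $r\in\{0,1,\dots,q-2p\}$, $\Gamma_{r,\frac pq}$ is the bimodal over-twist pattern whose cyclic permutation $\Pi_{r,\frac pq}$ of $\{1,\dots,q\}$ (action on the points of the cycle labelled $x_1<\dots<x_q$) is: $j\mapsto j+p$ for $1\le j\le r$; $j\mapsto q-j+r+1$ for $r+1\le j\le r+p$; $j\mapsto 2p-j+r+1$ for $r+p+1\le j\le r+2p$; $j\mapsto j-p$ for $r+2p+1\le j\le q$. $P_{r,\frac pq}$ denotes the cycle of $H_2$ exhibiting $\Gamma_{r,\frac pq}$ singled out by the location of its extremal points as follows (the paper asserts it is unique): for $r=0$ and $r=q-2p$ its points $M_r,m_r$ lie in $I_1$, and for $1\le r\le q-2p-1$, $M_r\in I_1$ and $m_r\in I_2$. Here the point of absolute maximum $M_r$ (resp. absolute minimum $m_r$) of a cycle $P$ is the point of $P$ whose image under $H_2$ is the largest (resp. smallest) point of $P$. For two such cycles, $P_{r_2,\frac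 pq}\triangleleft P_{r_1,\frac pq}$ ("$P_{r_2,\frac pq}$ floats above $P_{r_1,\frac pq}$") means $H_2(M_{r_2})>H_2(M_{r_1})$ and $H_2(m_{r_2})>H_2(m_{r_1})$. *)

theory Defs
  imports Complex_Main
begin

definition H2 :: "real \<Rightarrow> real" where
  "H2 x = (if x \<le> 1/3 then 3*x else if x \<le> 2/3 then 2 - 3*x else 3*x - 2)"

definition I0 :: "real set" where "I0 = {0..1/3}"
definition I1 :: "real set" where "I1 = {1/3..2/3}"
definition I2 :: "real set" where "I2 = {2/3..1}"

definition Pi_perm :: "nat \<Rightarrow> nat \<Rightarrow> nat \<Rightarrow> nat \<Rightarrow> nat" where
  "Pi_perm r p q j =
     (if 1 \<le> j \<and> j \<le> r then j + p
      else if r + 1 \<le> j \<and> j \<le> r + p then (q + r + 1) - j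
      else if r + p + 1 \<le> j \<and> j \<le> r + 2*p then (2*p + r + 1) - j
      else j - p)"

definition is_cycle :: "real set \<Rightarrow> nat \<Rightarrow> bool" where
  "is_cycle P q \<longleftrightarrow> finite P \<and> card P = q \<and> P \<noteq> {} \<and> P \<subseteq> {0..1} \<and> H2 ` P = P \<and>
     (\<forall>a\<in>P. \<forall>b\<in>P. \<exists>n. (H2 ^^ n) a = b)"

definition exhibits_pattern :: "real set \<Rightarrow> nat \<Rightarrow> nat \<Rightarrow> nat \<Rightarrow> bool" where
  "exhibits_pattern P r p q \<longleftrightarrow>
     (\<exists>x :: nat \<Rightarrow> real. strict_mono_on {1..q} x \<and> P = x ` {1..q} \<and>
        (\<forall>j\<in>{1..q}. H2 (x j) = x (Pi_perm r p q j)))"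

definition abs_max_pt :: "real set \<Rightarrow> real" where
  "abs_max_pt P = (THE a. a \<in> P \<and> H2 a = Max P)"
definition abs_min_pt :: "real set \<Rightarrow> real" where
  "abs_min_pt P = (THE a. a \<in> P \<and> H2 a = Min P)"

definition is_P :: "nat \<Rightarrow> nat \<Rightarrow> nat \<Rightarrow> real set \<Rightarrow> bool" where
  "is_P r p q P \<longleftrightarrow> is_cycle P q \<and> exhibits_pattern P r p q \<and>
     (if r = 0 \<or> r = q - 2*p
      then abs_max_pt P \<in> I1 \<and> abs_min_pt P \<in> I1
      else abs_max_pt P \<in> I1 \<and> abs_min_pt P \<in> I2)"

definition floats_above :: "real set \<Rightarrow> real set \<Rightarrow> bool" where
  "floats_above P2 P1 \<longleftrightarrow>
     H2 (abs_max_pt P2) > H2 (abs_max_pt P1) \<and> H2 (abs_min_pt P2) > H2 (abs_min_pt P1)"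

end

theory Submission
  imports Defs
begin

(* H2 maps the absolute maximum and minimum points of a cycle to its largest and smallest
   points, so writing y 1 < ... < y q for the points of P_k and z 1 < ... < z q for those of
   P_(k+1) we must show z q < y q and z 1 < y 1.  The location of M and m determines the lap
   of H2 containing every point.  Pair y a with z a or with z (a + 1) so that, while the two
   points lie on the same lap, the image pair is again such a pair and their signed distance
   is multiplied by 3.  A wrongly signed distance at (q, q) or (1, 1) would thus grow beyond 1,
   unless the paired orbit reaches the two absolute minimum points m_k, m_(k+1).  From (q, q)
   this never happens: folding back the upper part of the indices conjugates both permutations
   to the rotation by p, and the two indices stay one step apart.  From (1, 1) it would lead
   back to (1, 1) with the sign reversed.  Equality is excluded as distinct cycles are
   disjoint. *)

lemma H2_I0: "x \<le> 1/3 \<Longrightarrow> H2 x = 3 * x"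
  by (simp add: H2_def)

lemma H2_I1: "1/3 \<le> x \<Longrightarrow> x \<le> 2/3 \<Longrightarrow> H2 x = 2 - 3 * x"
  by (simp add: H2_def)

lemma H2_I2: "2/3 \<le> x \<Longrightarrow> H2 x = 3 * x - 2"
  by (auto simp: H2_def)

lemma Pi_perm_in_range: "j \<in> {1..q} \<Longrightarrow> r + 2 * p \<le> q \<Longrightarrow> Pi_perm r p q j \<in> {1..q}"
  by (auto simp: Pi_perm_def)

lemma Pi_perm_eq_last_iff:
  "j \<in> {1..q} \<Longrightarrow> 0 < p \<Longrightarrow> r + 2 * p < q \<Longrightarrow> Pi_perm r p q j = q \<longleftrightarrow> j = r + 1"
  by (auto simp: Pi_perm_def)

lemma Pi_perm_eq_first_iff:
  "j \<in> {1..q} \<Longrightarrow> 0 < p \<Longrightarrow> r + 2 * p < q \<Longrightarrow> Pi_perm r p q j = 1 \<longleftrightarrow> j = r + 2 * p"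
  by (auto simp: Pi_perm_def)

definition rotation_coord :: "nat \<Rightarrow> nat \<Rightarrow> nat \<Rightarrow> nat \<Rightarrow> nat" where
  "rotation_coord r p q j = (if j \<le> r + p then j else q + r + p + 1 - j)"

lemma rotation_coord_Pi_perm:
  assumes "j \<in> {1..q}" and "r + 2 * p \<le> q"
  shows "rotation_coord r p q (Pi_perm r p q j) mod q = (rotation_coord r p q j + p) mod q"
proof (cases "r + p < j \<and> j \<le> r + 2 * p")
  case True
  then have "Pi_perm r p q j = 2 * p + r + 1 - j" "2 * p + r + 1 - j \<le> r + p"
    by (auto simp: Pi_perm_def)
  then have "rotation_coord r p q j + p = q + rotation_coord r p q (Pi_perm r p q j)"
    using True assms by (simp add: rotation_coord_def)
  then show ?thesis by simp
next
  case False
  then have "rotation_coord r p q (Pi_perm r p q j) = rotation_coord r p q j + p"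
    using assms by (auto simp: rotation_coord_def Pi_perm_def)
  then show ?thesis by simp
qed

lemma funpow_Pi_perm_in_range:
  "j \<in> {1..q} \<Longrightarrow> r + 2 * p \<le> q \<Longrightarrow> (Pi_perm r p q ^^ n) j \<in> {1..q}"
proof (induction n)
  case (Suc n)
  then show ?case using Pi_perm_in_range by (simp del: atLeastAtMost_iff)
qed simp

lemma rotation_coord_funpow_Pi_perm:
  assumes "j \<in> {1..q}" and "r + 2 * p \<le> q"
  shows "rotation_coord r p q ((Pi_perm r p q ^^ n) j) mod q
    = (rotation_coord r p q j + n * p) mod q"
proof (induction n)
  case (Suc n)
  have "rotation_coord r p q ((Pi_perm r p q ^^ Suc n) j) mod q
      = (rotation_coord r p q ((Pi_perm r p q ^^ n) j) + p) mod q"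
    using rotation_coord_Pi_perm funpow_Pi_perm_in_range assms by simp
  also have "\<dots> = (rotation_coord r p q j + n * p + p) mod q"
    by (metis Suc.IH mod_add_left_eq)
  also have "\<dots> = (rotation_coord r p q j + Suc n * p) mod q"
    by (simp add: algebra_simps)
  finally show ?case .
qed simp

lemma sorted_list_of_set_image_strict_mono_on:
  fixes f :: "nat \<Rightarrow> 'a::linorder"
  assumes "strict_mono_on {1..q} f"
  shows "sorted_list_of_set (f ` {1..q}) = map f [1..<Suc q]"
proof (rule sorted_list_of_set_unique[THEN iffD1])
  have "sorted_wrt (\<lambda>i j. f i < f j) [1..<Suc q]"
    using assms by (auto simp: sorted_wrt_iff_nth_less strict_mono_on_def simp del: upt_Suc)
  then show "sorted_wrt (<) (map f [1..<Suc q]) \<and> set (map f [1..<Suc q]) = f ` {1..q}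
      \<and> length (map f [1..<Suc q]) = card (f ` {1..q})"
    using strict_mono_on_imp_inj_on[OF assms]
    by (auto simp: sorted_wrt_map card_image atLeastLessThanSuc_atLeastAtMost)
qed simp

lemma strict_mono_on_enumeration_unique:
  fixes f g :: "nat \<Rightarrow> 'a::linorder"
  assumes "strict_mono_on {1..q} f" and "strict_mono_on {1..q} g"
    and "f ` {1..q} = g ` {1..q}" and "j \<in> {1..q}"
  shows "f j = g j"
proof -
  have "map f [1..<Suc q] = map g [1..<Suc q]"
    using assms(3) sorted_list_of_set_image_strict_mono_on[OF assms(1)]
      sorted_list_of_set_image_strict_mono_on[OF assms(2)] by simp
  then show ?thesis
    using assms(4) by (simp add: atLeastLessThanSuc_atLeastAtMost del: upt_Suc)
qed

lemma funpow_in_invariant_set: "f ` A \<subseteq> A \<Longrightarrow> a \<in> A \<Longrightarrow> (f ^^ n) a \<in> A"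
  by (induction n) auto

lemma is_cycle_subset:
  assumes "is_cycle P q" and "is_cycle Q q'" and "a \<in> P" and "a \<in> Q"
  shows "P \<subseteq> Q"
proof
  fix b assume "b \<in> P"
  then obtain n where "b = (H2 ^^ n) a"
    using assms(1,3) unfolding is_cycle_def by metis
  then show "b \<in> Q"
    using assms(2,4) funpow_in_invariant_set[of H2 Q] by (simp add: is_cycle_def)
qed

lemma is_cycle_eqI: "is_cycle P q \<Longrightarrow> is_cycle Q q' \<Longrightarrow> a \<in> P \<Longrightarrow> a \<in> Q \<Longrightarrow> P = Q"
  by (meson equalityI is_cycle_subset)

locale over_twist_orbit =
  fixes r p q :: nat and x :: "nat \<Rightarrow> real"
  assumes p_pos: "0 < p"
    and r_bound: "r + 2 * p < q"
    and strict_mono: "strict_mono_on {1..q} x"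
    and in_unit: "j \<in> {1..q} \<Longrightarrow> x j \<in> {0..1}"
    and orbit: "j \<in> {1..q} \<Longrightarrow> H2 (x j) = x (Pi_perm r p q j)"
begin

lemma less_iff: "i \<in> {1..q} \<Longrightarrow> j \<in> {1..q} \<Longrightarrow> x i < x j \<longleftrightarrow> i < j"
  using strict_mono_on_less[OF strict_mono] .

lemma eq_iff: "i \<in> {1..q} \<Longrightarrow> j \<in> {1..q} \<Longrightarrow> x i = x j \<longleftrightarrow> i = j"
  using strict_mono_on_eq[OF strict_mono] .

lemma point_bounds: "j \<in> {1..q} \<Longrightarrow> x j \<in> {x 1..x q}"
  by (auto simp: strict_mono_on_less_eq[OF strict_mono])

lemma H2_point_bounds: "j \<in> {1..q} \<Longrightarrow> H2 (x j) \<in> {x 1..x q}"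
  using orbit point_bounds Pi_perm_in_range r_bound by simp

lemma Max_points: "Max (x ` {1..q}) = x q"
  using point_bounds r_bound by (intro Max_eqI) auto

lemma Min_points: "Min (x ` {1..q}) = x 1"
  using point_bounds r_bound by (intro Min_eqI) auto

lemma the_point_mapped_to:
  assumes "i \<in> {1..q}" and "c \<in> {1..q}"
    and "\<And>j. j \<in> {1..q} \<Longrightarrow> Pi_perm r p q j = c \<longleftrightarrow> j = i"
  shows "(THE a. a \<in> x ` {1..q} \<and> H2 a = x c) = x i"
proof (rule the_equality)
  show "x i \<in> x ` {1..q} \<and> H2 (x i) = x c"
    using assms(1) assms(3)[of i] orbit[of i] by simp
next
  fix a assume "a \<in> x ` {1..q} \<and> H2 a = x c"
  then obtain j where j: "j \<in> {1..q}" and "a = x j" and "x (Pi_perm r p q j) = x c"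
    using orbit by auto
  then have "Pi_perm r p q j = c"
    using eq_iff Pi_perm_in_range assms(2) r_bound by simp
  then show "a = x i"
    using assms(3) j \<open>a = x j\<close> by simp
qed

lemma abs_max_pt_points: "abs_max_pt (x ` {1..q}) = x (r + 1)"
  unfolding abs_max_pt_def Max_points
  using p_pos r_bound Pi_perm_eq_last_iff by (intro the_point_mapped_to) auto

lemma abs_min_pt_points: "abs_min_pt (x ` {1..q}) = x (r + 2 * p)"
  unfolding abs_min_pt_def Min_points
  using p_pos r_bound Pi_perm_eq_first_iff by (intro the_point_mapped_to) auto

lemma H2_abs_max_pt_points: "H2 (abs_max_pt (x ` {1..q})) = x q"
  using abs_max_pt_points orbit[of "r + 1"] p_pos r_bound by (simp add: Pi_perm_def)

lemma H2_abs_min_pt_points: "H2 (abs_min_pt (x ` {1..q})) = x 1"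
  using abs_min_pt_points orbit[of "r + 2 * p"] p_pos r_bound by (simp add: Pi_perm_def)

lemma first_point_pos: "0 < x 1"
proof -
  have "x 1 \<noteq> 0"
  proof
    assume "x 1 = 0"
    then have "x (Pi_perm r p q 1) = x 1"
      using orbit[of 1] r_bound by (simp add: H2_def)
    then have "Pi_perm r p q 1 = 1"
      using eq_iff Pi_perm_in_range r_bound by simp
    then show False
      using Pi_perm_eq_first_iff p_pos r_bound by simp
  qed
  then show ?thesis
    using in_unit[of 1] r_bound by simp
qed

lemma last_point_lt_1: "x q < 1"
proof -
  have "x q \<noteq> 1"
  proof
    assume "x q = 1"
    then have "x (Pi_perm r p q q) = x q"
      using orbit[of q] r_bound by (simp add: H2_def)
    then have "Pi_perm r p q q = q"
      using eq_iff Pi_perm_in_range r_bound by simp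
    then show False
      using Pi_perm_eq_last_iff p_pos r_bound by simp
  qed
  then show ?thesis
    using in_unit[of q] r_bound by simp
qed

end

(* x (r + 1) and x (r + 2 * p) are the points M_r and m_r, by abs_max_pt_points and
   abs_min_pt_points. *)
locale located_over_twist_orbit = over_twist_orbit +
  assumes r_pos: "0 < r"
    and M_in_I1: "x (r + 1) \<in> I1"
    and m_in_I2: "x (r + 2 * p) \<in> I2"
begin

lemma one_third_less_M: "1/3 < x (r + 1)"
proof -
  have "x (r + 1) \<noteq> 1/3"
    using orbit[of "r + 1"] last_point_lt_1 p_pos r_bound by (auto simp: H2_def Pi_perm_def)
  then show ?thesis
    using M_in_I1 by (simp add: I1_def)
qed

lemma two_thirds_less_m: "2/3 < x (r + 2 * p)"
proof -
  have "x (r + 2 * p) \<noteq> 2/3"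
    using orbit[of "r + 2 * p"] first_point_pos p_pos r_bound by (auto simp: H2_def Pi_perm_def)
  then show ?thesis
    using m_in_I2 by (simp add: I2_def)
qed

lemma in_I0:
  assumes "1 \<le> j" and "j \<le> r"
  shows "x j \<le> 1/3"
proof (rule ccontr)
  assume "\<not> x j \<le> 1/3"
  moreover have less: "x j < x (r + 1)"
    using assms r_bound less_iff by simp
  ultimately have "H2 (x (r + 1)) < H2 (x j)"
    using M_in_I1 by (simp add: H2_I1 I1_def)
  moreover have "H2 (x (r + 1)) = x q" "H2 (x j) \<le> x q"
    using orbit[of "r + 1"] H2_point_bounds[of j] assms r_bound p_pos by (auto simp: Pi_perm_def)
  ultimately show False by simp
qed

lemma in_I2:
  assumes "r + 2 * p \<le> j" and "j \<le> q"
  shows "2/3 < x j"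
  using two_thirds_less_m strict_mono_on_leD[OF strict_mono, of "r + 2 * p" j] assms p_pos by simp

lemma in_I1:
  assumes "r < j" and "j < r + 2 * p"
  shows "1/3 < x j" and "x j \<le> 2/3"
proof -
  show "1/3 < x j"
    using one_third_less_M strict_mono_on_leD[OF strict_mono, of "r + 1" j] assms r_bound by simp
  show "x j \<le> 2/3"
  proof (rule ccontr)
    assume "\<not> x j \<le> 2/3"
    moreover have less: "x j < x (r + 2 * p)"
      using assms r_bound less_iff by simp
    ultimately have "H2 (x j) < H2 (x (r + 2 * p))"
      using two_thirds_less_m by (simp add: H2_I2)
    moreover have "H2 (x (r + 2 * p)) = x 1" "x 1 \<le> H2 (x j)"
      using orbit[of "r + 2 * p"] H2_point_bounds[of j] assms r_bound p_pos
      by (auto simp: Pi_perm_def)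
    ultimately show False by simp
  qed
qed

lemma orbit_shift_up: "1 \<le> j \<Longrightarrow> j \<le> r \<Longrightarrow> x (j + p) = 3 * x j"
  using orbit[of j] in_I0[of j] r_bound by (simp add: H2_I0 Pi_perm_def)

lemma orbit_fold_top: "r < j \<Longrightarrow> j \<le> r + p \<Longrightarrow> x (q + r + 1 - j) = 2 - 3 * x j"
  using orbit[of j] in_I1[of j] p_pos r_bound by (simp add: H2_I1 Pi_perm_def)

lemma orbit_fold_bottom:
  "r + p < j \<Longrightarrow> j < r + 2 * p \<Longrightarrow> x (2 * p + r + 1 - j) = 2 - 3 * x j"
  using orbit[of j] in_I1[of j] r_bound by (simp add: H2_I1 Pi_perm_def)

lemma orbit_min_point: "x 1 = 3 * x (r + 2 * p) - 2"
  using orbit[of "r + 2 * p"] two_thirds_less_m p_pos r_bound by (simp add: H2_I2 Pi_perm_def)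

lemma orbit_shift_down: "r + 2 * p < j \<Longrightarrow> j \<le> q \<Longrightarrow> x (j - p) = 3 * x j - 2"
  using orbit[of j] in_I2[of j] by (simp add: H2_I2 Pi_perm_def)

end

lemma is_P_located_over_twist_orbit:
  assumes "is_P r p q P" and "0 < p" and "0 < r" and "r + 2 * p < q"
  obtains x where "located_over_twist_orbit r p q x" and "P = x ` {1..q}"
proof -
  have "r \<noteq> q - 2 * p"
    using assms(4) by linarith
  with assms(1,3) have cyc: "is_cycle P q" and "exhibits_pattern P r p q"
    and loc: "abs_max_pt P \<in> I1" "abs_min_pt P \<in> I2"
    by (auto simp: is_P_def)
  then obtain x where mono: "strict_mono_on {1..q} x" and P: "P = x ` {1..q}"
    and orb: "\<forall>j\<in>{1..q}. H2 (x j) = x (Pi_perm r p q j)"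
    by (auto simp: exhibits_pattern_def)
  have "x ` {1..q} \<subseteq> {0..1}"
    using cyc P by (simp add: is_cycle_def)
  then interpret over_twist_orbit r p q x
    using assms(2,4) mono orb by unfold_locales (auto simp: image_subset_iff)
  have "x (r + 1) \<in> I1" and "x (r + 2 * p) \<in> I2"
    using loc unfolding P abs_max_pt_points abs_min_pt_points .
  with assms(3) have "located_over_twist_orbit r p q x"
    by unfold_locales
  then show thesis using P by (rule that)
qed

locale adjacent_over_twist_orbits =
  Y: located_over_twist_orbit k p q y + Z: located_over_twist_orbit "k + 1" p q z
  for k p q :: nat and y z :: "nat \<Rightarrow> real"
begin

(* The gap of a coupled pair is positive iff y a lies above z a, resp. below z (a + 1).
   The diagonal pair at k + p + 1 is excluded: the two permutations send it to opposite ends. *)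
definition coupled :: "nat \<Rightarrow> nat \<Rightarrow> bool" where
  "coupled a b \<longleftrightarrow> 1 \<le> a \<and> b \<le> q \<and> (b = a \<and> a \<noteq> k + p + 1 \<or> b = a + 1)"

definition gap :: "nat \<Rightarrow> nat \<Rightarrow> real" where
  "gap a b = (if b = a then y a - z a else z b - y a)"

lemma gap_step_shifted:
  assumes "1 \<le> a" and "a + 1 \<le> q" and "a \<noteq> k + 2 * p"
  shows "coupled (Pi_perm k p q a) (Pi_perm (k + 1) p q (a + 1))
    \<and> gap (Pi_perm k p q a) (Pi_perm (k + 1) p q (a + 1)) = 3 * (z (a + 1) - y a)"
proof -
  consider "a \<le> k" | "k < a" "a \<le> k + p" | "k + p < a" "a < k + 2 * p" | "k + 2 * p < a"
    using assms(3) by linarith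
  then show ?thesis
  proof cases
    case 1
    then have "Pi_perm k p q a = a + p" "Pi_perm (k + 1) p q (a + 1) = a + p + 1"
      using assms(1) by (simp_all add: Pi_perm_def)
    moreover have "y (a + p) = 3 * y a" "z (a + 1 + p) = 3 * z (a + 1)"
      using 1 assms(1) Y.orbit_shift_up[of a] Z.orbit_shift_up[of "a + 1"] by simp_all
    ultimately show ?thesis
      using 1 assms(1) Y.r_bound by (simp add: coupled_def gap_def)
  next
    case 2
    then have "Pi_perm k p q a = q + k + 1 - a" "Pi_perm (k + 1) p q (a + 1) = q + k + 1 - a"
      by (simp_all add: Pi_perm_def)
    moreover have "y (q + k + 1 - a) = 2 - 3 * y a" "z (q + k + 1 - a) = 2 - 3 * z (a + 1)"
      using 2 Y.orbit_fold_top[of a] Z.orbit_fold_top[of "a + 1"] by simp_all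
    ultimately show ?thesis
      using 2 Y.r_bound by (auto simp: coupled_def gap_def)
  next
    case 3
    then have "Pi_perm k p q a = 2 * p + k + 1 - a"
      and "Pi_perm (k + 1) p q (a + 1) = 2 * p + k + 1 - a"
      by (simp_all add: Pi_perm_def)
    moreover have "y (2 * p + k + 1 - a) = 2 - 3 * y a" "z (2 * p + k + 1 - a) = 2 - 3 * z (a + 1)"
      using 3 Y.orbit_fold_bottom[of a] Z.orbit_fold_bottom[of "a + 1"] by simp_all
    ultimately show ?thesis
      using 3 Y.r_bound by (auto simp: coupled_def gap_def)
  next
    case 4
    then have "Pi_perm k p q a = a - p" "Pi_perm (k + 1) p q (a + 1) = a - p + 1"
      by (simp_all add: Pi_perm_def)
    moreover have "y (a - p) = 3 * y a - 2" "z (a - p + 1) = 3 * z (a + 1) - 2"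
      using 4 assms(2) Y.orbit_shift_down[of a] Z.orbit_shift_down[of "a + 1"]
      by (simp_all add: Suc_diff_le)
    ultimately show ?thesis
      using 4 assms(2) by (auto simp: coupled_def gap_def)
  qed
qed

lemma gap_step_diagonal:
  assumes "1 \<le> a" and "a \<le> q" and "a \<noteq> k + p + 1"
  shows "0 < y a - z a \<or> coupled (Pi_perm k p q a) (Pi_perm (k + 1) p q a)
    \<and> gap (Pi_perm k p q a) (Pi_perm (k + 1) p q a) = 3 * (y a - z a)"
proof -
  consider "a \<le> k" | "a = k + 1" | "k + 1 < a" "a \<le> k + p" | "k + p + 1 < a" "a < k + 2 * p"
    | "a = k + 2 * p" | "a = k + 2 * p + 1" | "k + 2 * p + 1 < a"
    using assms(3) by linarith
  then show ?thesis
  proof cases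
    case 1
    then have "Pi_perm k p q a = a + p" "Pi_perm (k + 1) p q a = a + p"
      using assms(1) by (simp_all add: Pi_perm_def)
    moreover have "y (a + p) = 3 * y a" "z (a + p) = 3 * z a"
      using 1 assms(1) Y.orbit_shift_up[of a] Z.orbit_shift_up[of a] by simp_all
    ultimately show ?thesis
      using 1 assms(1) Y.r_bound by (auto simp: coupled_def gap_def)
  next
    case 2
    then have "z a \<le> 1/3" "1/3 < y a"
      using Z.in_I0[of a] Y.in_I1(1)[of a] Y.p_pos by simp_all
    then show ?thesis by simp
  next
    case 3
    then have "Pi_perm k p q a = q + k + 1 - a" "Pi_perm (k + 1) p q a = q + k + 1 - a + 1"
      using Y.r_bound by (simp_all add: Pi_perm_def)
    moreover have "y (q + k + 1 - a) = 2 - 3 * y a" "z (q + k + 1 - a + 1) = 2 - 3 * z a"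
      using 3 Y.r_bound Y.orbit_fold_top[of a] Z.orbit_fold_top[of a] by (simp_all add: Suc_diff_le)
    ultimately show ?thesis
      using 3 Y.r_bound by (auto simp: coupled_def gap_def)
  next
    case 4
    then have "Pi_perm k p q a = 2 * p + k + 1 - a" "Pi_perm (k + 1) p q a = 2 * p + k + 1 - a + 1"
      by (simp_all add: Pi_perm_def)
    moreover have "y (2 * p + k + 1 - a) = 2 - 3 * y a" "z (2 * p + k + 1 - a + 1) = 2 - 3 * z a"
      using 4 Y.orbit_fold_bottom[of a] Z.orbit_fold_bottom[of a] by (simp_all add: Suc_diff_le)
    ultimately show ?thesis
      using 4 Y.r_bound by (auto simp: coupled_def gap_def)
  next
    case 5
    then have "z a \<le> 2/3" "2/3 < y a"
      using Z.in_I1(2)[of a] Y.in_I2[of a] Y.p_pos Y.r_bound by simp_all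
    then show ?thesis by simp
  next
    case 6
    then have "y (k + p + 1) = 3 * y a - 2" "z 1 = 3 * z a - 2"
      using Y.orbit_shift_down[of a] Z.orbit_min_point Z.r_bound by (simp_all add: add.commute)
    moreover have "1/3 < y (k + p + 1)"
      using Y.one_third_less_M strict_mono_on_leD[OF Y.strict_mono, of "k + 1" "k + p + 1"] Y.r_bound
      by simp
    moreover have "z 1 \<le> 1/3"
      using Z.in_I0[of 1] by simp
    ultimately show ?thesis by simp
  next
    case 7
    then have "Pi_perm k p q a = a - p" "Pi_perm (k + 1) p q a = a - p"
      by (simp_all add: Pi_perm_def)
    moreover have "y (a - p) = 3 * y a - 2" "z (a - p) = 3 * z a - 2"
      using 7 assms(2) Y.orbit_shift_down[of a] Z.orbit_shift_down[of a] by simp_all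
    ultimately show ?thesis
      using 7 assms(2) by (auto simp: coupled_def gap_def)
  qed
qed

(* (k + 2 * p, k + 2 * p + 1) is the pair (m_k, m_(k+1)); it is mapped to (1, 1) with the
   sign of the gap reversed. *)
lemma gap_step:
  assumes "coupled a b" and "(a, b) \<noteq> (k + 2 * p, k + 2 * p + 1)"
  shows "0 < gap a b \<or> coupled (Pi_perm k p q a) (Pi_perm (k + 1) p q b)
    \<and> gap (Pi_perm k p q a) (Pi_perm (k + 1) p q b) = 3 * gap a b"
  using assms gap_step_diagonal[of a] gap_step_shifted[of a] by (auto simp: coupled_def gap_def)

lemma abs_gap_le_1: "coupled a b \<Longrightarrow> \<bar>gap a b\<bar> \<le> 1"
  using Y.in_unit[of a] Z.in_unit[of a] Z.in_unit[of b] by (auto simp: coupled_def gap_def)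

lemma negative_gap_reaches_fold_pair:
  assumes "coupled s t" and "gap s t < 0"
  obtains n where "(Pi_perm k p q ^^ n) s = k + 2 * p"
    and "(Pi_perm (k + 1) p q ^^ n) t = k + 2 * p + 1"
    and "z (k + 2 * p + 1) < y (k + 2 * p)"
proof -
  define a where "a n = (Pi_perm k p q ^^ n) s" for n
  define b where "b n = (Pi_perm (k + 1) p q ^^ n) t" for n
  have "\<exists>n. a n = k + 2 * p \<and> b n = k + 2 * p + 1 \<and> gap (a n) (b n) < 0"
  proof (rule ccontr)
    assume avoids: "\<not> ?thesis"
    have expand: "coupled (a n) (b n) \<and> gap (a n) (b n) = 3 ^ n * gap s t" for n
    proof (induction n)
      case 0
      then show ?case using assms(1) by (simp add: a_def b_def)
    next
      case (Suc n)
      then have negative: "gap (a n) (b n) < 0"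
        using assms(2) by (simp add: mult_pos_neg)
      with avoids have "(a n, b n) \<noteq> (k + 2 * p, k + 2 * p + 1)"
        by auto
      then have "coupled (a (Suc n)) (b (Suc n))
          \<and> gap (a (Suc n)) (b (Suc n)) = 3 * gap (a n) (b n)"
        using gap_step[of "a n" "b n"] Suc.IH negative by (simp add: a_def b_def)
      then show ?case
        using Suc.IH by simp
    qed
    obtain n where "1 / \<bar>gap s t\<bar> < 3 ^ n"
      using real_arch_pow[of 3] by auto
    then have "1 < \<bar>gap (a n) (b n)\<bar>"
      using expand[of n] assms(2) by (simp add: abs_mult field_simps)
    then show False
      using expand[of n] abs_gap_le_1 by fastforce
  qed
  then show thesis
    using that by (auto simp: a_def b_def gap_def)
qed

lemma first_points_le: "z 1 \<le> y 1"
proof (rule ccontr)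
  assume "\<not> z 1 \<le> y 1"
  then have "coupled 1 1" and "gap 1 1 < 0"
    using Y.r_bound Y.r_pos by (auto simp: coupled_def gap_def)
  then obtain n where "z (k + 2 * p + 1) < y (k + 2 * p)"
    by (rule negative_gap_reaches_fold_pair)
  then have "z 1 < y 1"
    using Y.orbit_min_point Z.orbit_min_point by (simp add: add.commute)
  with \<open>\<not> z 1 \<le> y 1\<close> show False by simp
qed

(* In rotation coordinates the paired orbit of (q, q) stays one step apart, whereas the
   indices of m_k and m_(k+1) have the same rotation coordinate q + 1 - p. *)
lemma last_points_le: "z q \<le> y q"
proof (rule ccontr)
  assume "\<not> z q \<le> y q"
  then have "coupled q q" and "gap q q < 0"
    using Y.r_bound Y.p_pos by (auto simp: coupled_def gap_def)
  then obtain n where fold_y: "(Pi_perm k p q ^^ n) q = k + 2 * p"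
    and fold_z: "(Pi_perm (k + 1) p q ^^ n) q = k + 2 * p + 1"
    by (rule negative_gap_reaches_fold_pair)
  have "(q + 1 - p) mod q = (k + p + 1 + n * p) mod q"
    using rotation_coord_funpow_Pi_perm[of q q k p n] fold_y Y.p_pos Y.r_bound
    by (simp add: rotation_coord_def)
  moreover have "(q + 1 - p) mod q = (k + p + 1 + n * p + 1) mod q"
    using rotation_coord_funpow_Pi_perm[of q q "k + 1" p n] fold_z Z.p_pos Z.r_bound
    by (simp add: rotation_coord_def)
  ultimately have "(k + p + 1 + n * p + 1) mod q = (k + p + 1 + n * p) mod q"
    by simp
  moreover have "(k + p + 1 + n * p + 1) mod q \<noteq> (k + p + 1 + n * p) mod q"
    using Y.r_bound Y.p_pos by (simp add: mod_Suc)
  ultimately show False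
    by contradiction
qed

lemma points_differ: "y ` {1..q} \<noteq> z ` {1..q}"
proof
  assume "y ` {1..q} = z ` {1..q}"
  then have "y j = z j" if "j \<in> {1..q}" for j
    using strict_mono_on_enumeration_unique[OF Y.strict_mono Z.strict_mono] that by blast
  moreover have "H2 (y (k + 1)) = y q" and "H2 (z (k + 1)) = z (k + 1 + p)"
    using Y.orbit[of "k + 1"] Z.orbit[of "k + 1"] Y.p_pos Z.r_bound by (simp_all add: Pi_perm_def)
  ultimately have "y (k + 1 + p) = y q"
    using Z.r_bound by simp
  then show False
    using Y.eq_iff Z.r_bound by simp
qed

end

theorem mainTheorem12:
  fixes p q k :: nat and Pk Pk1 :: "real set"
  assumes "coprime p q" and "0 < p" and "2 * p < q"
    and "1 \<le> k" and "k + 2 \<le> q - 2 * p"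
    and "is_P k p q Pk" and "is_P (k + 1) p q Pk1"
  shows "floats_above Pk Pk1 \<and>
         H2 (abs_max_pt Pk) > H2 (abs_max_pt Pk1) \<and> H2 (abs_min_pt Pk) > H2 (abs_min_pt Pk1)"
proof -
  have "k + 2 * p < q" and "k + 1 + 2 * p < q"
    using assms(3,5) by linarith+
  obtain y where Y: "located_over_twist_orbit k p q y" and Pk: "Pk = y ` {1..q}"
    using is_P_located_over_twist_orbit[OF assms(6,2)] assms(4) \<open>k + 2 * p < q\<close> by auto
  obtain z where Z: "located_over_twist_orbit (k + 1) p q z" and Pk1: "Pk1 = z ` {1..q}"
    using is_P_located_over_twist_orbit[OF assms(7,2)] \<open>k + 1 + 2 * p < q\<close> by auto
  interpret adjacent_over_twist_orbits k p q y z
    using Y Z by (simp add: adjacent_over_twist_orbits_def)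
  have "Pk \<inter> Pk1 = {}"
    using is_cycle_eqI[of Pk q Pk1 q] assms(6,7) points_differ by (auto simp: is_P_def Pk Pk1)
  moreover have "y 1 \<in> Pk" "y q \<in> Pk" "z 1 \<in> Pk1" "z q \<in> Pk1"
    using \<open>k + 2 * p < q\<close> unfolding Pk Pk1 by auto
  ultimately have "y q \<noteq> z q" and "y 1 \<noteq> z 1"
    by (metis disjoint_iff)+
  then have "z q < y q" and "z 1 < y 1"
    using last_points_le first_points_le by auto
  then show ?thesis
    using Y.H2_abs_max_pt_points Y.H2_abs_min_pt_points
      Z.H2_abs_max_pt_points Z.H2_abs_min_pt_points
    by (simp add: floats_above_def Pk Pk1)
qed

end
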